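(* Let $1\le k<n$ and $T\ge1$. Let $\mathcal{B}^n_{n-k}=\{w\in\mathbb{R}^n:\sum_iw_i=1,\ 0\le w_i\le\frac1{n-k}\}$. Run the following algorithm: start from $w_1\in\mathcal{B}^n_{n-k}$; at each $t$, write $w_t$ as a convex combination $\sum_jp_jr_j$ of corners $r_j$ of $\mathcal{B}^n_{n-k}$ (vectors with $n-k$ entries equal to $\frac1{n-k}$ and the rest $0$), sample $r=r_j$ with probability $p_j$, and select the subset $v_t=(n-k)r\in\{0,1\}^n$ of $n-k$ experts (so $\mathbb{E}[v_t]=(n-k)w_t$); then receive the loss vector $\ell_t\in[0,1]^n$ and update $$v'_{t+1,i}=\frac{w_{t,i}e^{-\eta\ell_{t,i}}}{\sum_jw_{t,j}e^{-\eta\ell_{t,j}}},\quad \hat w_{t+1,i}=\frac\alpha n+(1-\alpha)v'_{t+1,i},\quad w_{t+1}=\operatorname{argmin}_{w\in\mathcal{B}^n_{n-k}}d(w,\hat w_{t+1}),$$ where $d(q,w)=\sum_iq_i\ln(q_i/w_i)$. Suppose $L>0$ satisfies $\min_{q\in\mathcal{B}^n_{n-k}}\sum_{t=r}^s(n-k)q^\top\ell_t\le L$ for all $1\le r\le s\le T$, and set $\alpha=\frac1{T(n-k)+1}$, $D=(n-k)\ln(n(1+(n-k)T))+1$, $\eta=\ln(1+\sqrt{2D/L})$. Then $$\mathcal{R}_a^{\mathrm{subexp}}:=\max_{[r,s]\subset[1,T]}\Big\{\sum_{t=r}^s\mathbb{E}[v_t^\top\ell_t]-\min_{u\in\mathcal{S}_{\mathrm{vec}}}\sum_{t=r}^su^\top\ell_t\Big\}\le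 O(\sqrt{2LD}+D),$$ where $\mathcal{S}_{\mathrm{vec}}$ is the set of vectors in $\{0,1\}^n$ with exactly $n-k$ entries equal to $1$.
   Context: Here $\mathbb{E}[v_t^\top\ell_t]=(n-k)w_t^\top\ell_t$, and $\min_{u\in\mathcal{S}_{\mathrm{vec}}}\sum_t u^\top\ell_t=\min_{q\in\mathcal{B}^n_{n-k}}\sum_t(n-k)q^\top\ell_t$. $O(\cdot)$ hides an absolute constant. *)

theory Defs
  imports "HOL-Analysis.Analysis"
begin

text \<open>Vectors in R^n are functions nat => real, indices 0..n-1, zero outside.\<close>

definition capped_simplex :: "nat \<Rightarrow> nat \<Rightarrow> (nat \<Rightarrow> real) set" where
  "capped_simplex n m = {w. (\<Sum>i<n. w i) = 1 \<and> (\<forall>i<n. 0 \<le> w i \<and> w i \<le> 1 / real m)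
                              \<and> (\<forall>i\<ge>n. w i = 0)}"

definition subset_vecs :: "nat \<Rightarrow> nat \<Rightarrow> (nat \<Rightarrow> real) set" where
  "subset_vecs n m = {u. (\<forall>i<n. u i = 0 \<or> u i = 1) \<and> (\<forall>i\<ge>n. u i = 0)
                          \<and> card {i. i < n \<and> u i = 1} = m}"

definition dotn :: "nat \<Rightarrow> (nat \<Rightarrow> real) \<Rightarrow> (nat \<Rightarrow> real) \<Rightarrow> real" where
  "dotn n a b = (\<Sum>i<n. a i * b i)"

definition kl_div :: "nat \<Rightarrow> (nat \<Rightarrow> real) \<Rightarrow> (nat \<Rightarrow> real) \<Rightarrow> real" where
  "kl_div n q w = (\<Sum>i<n. q i * ln (q i / w i))"

definition mixed_update :: "nat \<Rightarrow> real \<Rightarrow> real \<Rightarrow> (nat \<Rightarrow> real) \<Rightarrow> (nat \<Rightarrow> real) \<Rightarrow> (nat \<Rightarrow> real)" where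
  "mixed_update n \<eta> \<alpha> w l = (\<lambda>i. \<alpha> / real n + (1 - \<alpha>) *
       (w i * exp (- \<eta> * l i) / (\<Sum>j<n. w j * exp (- \<eta> * l j))))"

definition is_run :: "nat \<Rightarrow> nat \<Rightarrow> nat \<Rightarrow> real \<Rightarrow> real \<Rightarrow> (nat \<Rightarrow> nat \<Rightarrow> real)
                      \<Rightarrow> (nat \<Rightarrow> nat \<Rightarrow> real) \<Rightarrow> bool" where
  "is_run n k T \<eta> \<alpha> l w \<longleftrightarrow>
     w 1 \<in> capped_simplex n (n - k) \<and>
     (\<forall>t. 1 \<le> t \<and> t < T \<longrightarrow>
        is_arg_min (\<lambda>q. kl_div n q (mixed_update n \<eta> \<alpha> (w t) (l t)))
                   (\<lambda>q. q \<in> capped_simplex n (n - k)) (w (t + 1)))"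

text \<open>Expected loss of the sampled subset v_t: E[v_t . l_t] = (n-k) w_t . l_t.\<close>
definition expected_loss :: "nat \<Rightarrow> nat \<Rightarrow> (nat \<Rightarrow> real) \<Rightarrow> (nat \<Rightarrow> real) \<Rightarrow> real" where
  "expected_loss n k w l = real (n - k) * dotn n w l"

definition interval_regret :: "nat \<Rightarrow> nat \<Rightarrow> (nat \<Rightarrow> nat \<Rightarrow> real) \<Rightarrow> (nat \<Rightarrow> nat \<Rightarrow> real)
                               \<Rightarrow> nat \<Rightarrow> nat \<Rightarrow> real" where
  "interval_regret n k l w r s =
     (\<Sum>t=r..s. expected_loss n k (w t) (l t))
     - Min ((\<lambda>u. \<Sum>t=r..s. dotn n u (l t)) ` subset_vecs n (n - k))"

end

theory Submission
  imports Defs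
begin

text \<open>Let \<open>K\<close> be the capped simplex and \<open>w'\<^sub>t\<close> the mixed update computed from \<open>w\<^sub>t\<close>. For every
  comparator \<open>q \<in> K\<close>, one exponential-weights round gives
  \<open>(1 - e\<^sup>-\<^sup>\<eta>) w\<^sub>t\<cdot>\<ell>\<^sub>t \<le> d(q,w\<^sub>t) - d(q,w'\<^sub>t) + \<eta> q\<cdot>\<ell>\<^sub>t - ln (1 - \<alpha>)\<close>, and the KL projection
  \<open>w\<^sub>t\<^sub>+\<^sub>1\<close> of \<open>w'\<^sub>t\<close> onto \<open>K\<close> satisfies \<open>d(q,w\<^sub>t\<^sub>+\<^sub>1) \<le> d(q,w'\<^sub>t)\<close> (generalised Pythagoras; it
  needs the projection to be interior, which the logarithmic singularity of \<open>d\<close> at the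
  boundary enforces). Summing over \<open>[r,s]\<close> telescopes. Mixing with the uniform vector keeps
  \<open>w'\<^sub>t \<ge> \<alpha>/n\<close>, so the initial term \<open>d(q,w\<^sub>r)\<close> is at most \<open>ln (n/((n-k)\<alpha>))\<close> for every
  \<open>r \<ge> 2\<close>: this is what makes the bound hold on all intervals simultaneously. On a fixed loss
  vector, \<open>(n-k) q\<close> is dominated by the indicator of the \<open>n-k\<close> cheapest experts, so the best
  subset and the best point of \<open>K\<close> have the same loss. Tuning \<open>\<eta>\<close> gives the bound with
  constant 3; the first round, where \<open>w\<^sub>1\<close> is arbitrary, costs at most \<open>n-k \<le> 2D\<close>.\<close>

lemma mult_ln_div_ge_diff:
  fixes a b :: real
  assumes "0 < a" "0 \<le> b"
  shows "b - a \<le> b * ln (b / a)"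
proof (cases "b = 0")
  case False
  with assms have "0 < b" by simp
  have "ln (a / b) \<le> a / b - 1"
    using assms \<open>0 < b\<close> by (intro ln_le_minus_one) simp
  moreover have "ln (b / a) = - ln (a / b)"
    using assms \<open>0 < b\<close> by (simp add: ln_div)
  ultimately have "b * (1 - a / b) \<le> b * ln (b / a)"
    using \<open>0 < b\<close> by (intro mult_left_mono) auto
  moreover have "b * (1 - a / b) = b - a"
    using \<open>0 < b\<close> by (simp add: field_simps)
  ultimately show ?thesis by simp
qed (use assms in simp)

text \<open>Convexity of \<open>x \<mapsto> x ln (x/c)\<close>: the graph lies above the tangent at \<open>a\<close>.\<close>

lemma mult_ln_div_tangent_le:
  fixes a b c :: real
  assumes "0 < c" "0 < a" "0 \<le> b"
  shows "(b - a) * (ln (a / c) + 1) \<le> b * ln (b / c) - a * ln (a / c)"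
proof (cases "b = 0")
  case False
  with assms have "ln (b / c) = ln (b / a) + ln (a / c)"
    by (simp add: ln_div)
  then have "b * ln (b / c) - a * ln (a / c) - (b - a) * (ln (a / c) + 1) = b * ln (b / a) - (b - a)"
    by (simp add: algebra_simps)
  with mult_ln_div_ge_diff[OF assms(2,3)] show ?thesis by linarith
qed (use assms in \<open>simp add: algebra_simps\<close>)

lemma exp_neg_mult_le_chord:
  fixes x \<eta> :: real
  assumes "0 \<le> x" "x \<le> 1"
  shows "exp (- \<eta> * x) \<le> 1 - (1 - exp (- \<eta>)) * x"
proof -
  have "exp ((1 - x) * 0 + x * (- \<eta>)) \<le> (1 - x) * exp 0 + x * exp (- \<eta>)"
    using convex_onD[OF exp_convex, of x 0 "- \<eta>"] assms by (simp add: algebra_simps)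
  then show ?thesis by (simp add: algebra_simps)
qed

section \<open>KL divergence and projection onto the capped simplex\<close>

lemma kl_div_nonneg:
  assumes "\<forall>i<n. 0 \<le> q i" "\<forall>i<n. 0 < w i" "(\<Sum>i<n. q i) = (\<Sum>i<n. w i)"
  shows "0 \<le> kl_div n q w"
proof -
  have "(\<Sum>i<n. q i - w i) \<le> (\<Sum>i<n. q i * ln (q i / w i))"
    by (rule sum_mono) (use assms mult_ln_div_ge_diff in auto)
  moreover have "(\<Sum>i<n. q i - w i) = 0"
    using assms(3) by (simp add: sum_subtractf)
  ultimately show ?thesis by (simp add: kl_div_def)
qed

lemma kl_div_le_ln_ratio:
  assumes q: "\<forall>i<n. 0 \<le> q i \<and> q i \<le> c" "(\<Sum>i<n. q i) = 1"
    and w: "0 < b" "\<forall>i<n. b \<le> w i"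
  shows "kl_div n q w \<le> ln (c / b)"
proof -
  have "q i * ln (q i / w i) \<le> q i * ln (c / b)" if "i < n" for i
  proof (cases "q i = 0")
    case False
    with q that have "0 < q i" by (simp add: less_le)
    with q w that have "ln (q i / w i) \<le> ln (c / b)"
      by (intro ln_mono frac_le) (auto intro: less_le_trans)
    with \<open>0 < q i\<close> show ?thesis by (intro mult_left_mono) auto
  qed simp
  then have "kl_div n q w \<le> (\<Sum>i<n. q i * ln (c / b))"
    unfolding kl_div_def by (intro sum_mono) auto
  also have "\<dots> = ln (c / b)"
    using q(2) by (simp add: sum_distrib_right[symmetric])
  finally show ?thesis .
qed

lemma capped_simplex_convex_comb:
  assumes "p \<in> capped_simplex n m" "u \<in> capped_simplex n m" "0 \<le> e" "e \<le> 1"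
  shows "(\<lambda>i. p i + e * (u i - p i)) \<in> capped_simplex n m"
proof -
  have "(\<Sum>i<n. p i + e * (u i - p i)) = (\<Sum>i<n. p i) + e * ((\<Sum>i<n. u i) - (\<Sum>i<n. p i))"
    by (simp add: sum.distrib sum_distrib_left[symmetric] sum_subtractf)
  moreover have "0 \<le> p i + e * (u i - p i) \<and> p i + e * (u i - p i) \<le> 1 / real m" if "i < n" for i
  proof -
    have h: "0 \<le> p i" "p i \<le> 1 / real m" "0 \<le> u i" "u i \<le> 1 / real m"
      using assms that unfolding capped_simplex_def by auto
    have "(1 - e) * p i + e * u i \<le> (1 - e) * (1 / real m) + e * (1 / real m)"
      using h assms(3,4) by (intro add_mono mult_left_mono) auto
    moreover have "(1 - e) * (1 / real m) + e * (1 / real m) = 1 / real m"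
      by (simp add: add_divide_distrib[symmetric])
    moreover have "0 \<le> (1 - e) * p i + e * u i"
      using h assms(3,4) by simp
    moreover have "p i + e * (u i - p i) = (1 - e) * p i + e * u i"
      by (simp add: algebra_simps)
    ultimately show ?thesis by linarith
  qed
  ultimately show ?thesis
    using assms unfolding capped_simplex_def by auto
qed

lemma uniform_in_capped_simplex:
  assumes "1 \<le> m" "m \<le> n"
  shows "(\<lambda>i. if i < n then 1 / real n else 0) \<in> capped_simplex n m"
  using assms by (simp add: capped_simplex_def frac_le)

text \<open>First-order optimality of a KL projection \<open>p\<close>: \<open>d(\<cdot>,w)\<close> does not decrease from \<open>p\<close> to
  \<open>p + e (u - p)\<close>, and the tangent inequality at that intermediate point turns this into the
  stated bound.\<close>

lemma kl_projection_first_order: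
  assumes amin: "is_arg_min (\<lambda>q. kl_div n q w) (\<lambda>q. q \<in> capped_simplex n m) p"
    and u: "u \<in> capped_simplex n m" and w: "\<forall>i<n. 0 < w i"
    and e: "0 < e" "e \<le> 1" and pos: "\<forall>i<n. 0 < p i + e * (u i - p i)"
  shows "0 \<le> (\<Sum>i<n. (u i - p i) * ln ((p i + e * (u i - p i)) / w i))"
proof -
  define q where "q = (\<lambda>i. p i + e * (u i - p i))"
  have pK: "p \<in> capped_simplex n m"
    using amin by (simp add: is_arg_min_def)
  then have "q \<in> capped_simplex n m"
    unfolding q_def using capped_simplex_convex_comb u e by simp
  with amin have le: "kl_div n p w \<le> kl_div n q w"
    by (auto simp: is_arg_min_def not_less)
  have "(\<Sum>i<n. (p i - q i) * (ln (q i / w i) + 1))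
        \<le> (\<Sum>i<n. p i * ln (p i / w i) - q i * ln (q i / w i))"
    by (intro sum_mono mult_ln_div_tangent_le)
      (use w pos pK in \<open>auto simp: q_def capped_simplex_def\<close>)
  also have "\<dots> = kl_div n p w - kl_div n q w"
    by (simp add: kl_div_def sum_subtractf)
  also have "(\<Sum>i<n. (p i - q i) * (ln (q i / w i) + 1))
             = - e * (\<Sum>i<n. (u i - p i) * (ln (q i / w i) + 1))"
    by (simp add: q_def sum_distrib_left sum_negf[symmetric] mult.assoc)
  finally have "0 \<le> e * (\<Sum>i<n. (u i - p i) * (ln (q i / w i) + 1))"
    using le by linarith
  with e have "0 \<le> (\<Sum>i<n. (u i - p i) * (ln (q i / w i) + 1))"
    by (simp add: zero_le_mult_iff)
  also have "\<dots> = (\<Sum>i<n. (u i - p i) * ln (q i / w i)) + ((\<Sum>i<n. u i) - (\<Sum>i<n. p i))"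
    by (simp add: algebra_simps sum.distrib sum_subtractf)
  finally show ?thesis
    using u pK by (simp add: q_def capped_simplex_def)
qed

lemma kl_projection_first_order_eventually:
  assumes amin: "is_arg_min (\<lambda>q. kl_div n q w) (\<lambda>q. q \<in> capped_simplex n m) p"
    and u: "u \<in> capped_simplex n m" and w: "\<forall>i<n. 0 < w i"
    and support: "\<forall>i<n. 0 < p i \<or> 0 < u i"
  shows "\<forall>\<^sub>F e in at_right 0. 0 \<le> (\<Sum>i<n. (u i - p i) * ln ((p i + e * (u i - p i)) / w i))"
proof -
  have "\<forall>\<^sub>F e in at_right 0. e \<in> {0<..<(1::real)}"
    by (rule eventually_at_right_real) simp
  then show ?thesis
  proof (rule eventually_mono)
  fix e :: real
  assume e: "e \<in> {0<..<1}"
  have "0 < (1 - e) * p i + e * u i" if "i < n" for i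
  proof -
    have "0 \<le> p i" "0 \<le> u i"
      using amin u that by (simp_all add: is_arg_min_def capped_simplex_def)
    with e have "0 \<le> (1 - e) * p i" "0 \<le> e * u i"
      by simp_all
    moreover have "0 < (1 - e) * p i \<or> 0 < e * u i"
      using support that e by auto
    ultimately show ?thesis by linarith
  qed
  then have "\<forall>i<n. 0 < p i + e * (u i - p i)"
    by (simp add: algebra_simps)
  with e show "0 \<le> (\<Sum>i<n. (u i - p i) * ln ((p i + e * (u i - p i)) / w i))"
    using kl_projection_first_order[OF amin u w] by simp
  qed
qed

text \<open>Towards the uniform vector the terms with \<open>p\<^sub>i = 0\<close> contribute \<open>(1/n) ln e \<rightarrow> -\<infinity>\<close>
  while the others stay bounded.\<close>

lemma uniform_direction_sum_at_bot:
  fixes p w :: "nat \<Rightarrow> real" and n :: nat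
  defines "u \<equiv> \<lambda>i. if i < n then 1 / real n else 0"
  assumes w: "\<forall>i<n. 0 < w i" and zero: "i\<^sub>0 < n" "p i\<^sub>0 = 0"
  shows "filterlim (\<lambda>e. \<Sum>i<n. (u i - p i) * ln ((p i + e * (u i - p i)) / w i)) at_bot (at_right 0)"
proof -
  define J where "J = {i. i < n \<and> p i = 0}"
  define P where "P = {i. i < n \<and> p i \<noteq> 0}"
  have fin: "finite J" "finite P" and split: "{..<n} = P \<union> J" "P \<inter> J = {}"
    unfolding J_def P_def by auto
  have n: "0 < real n"
    using zero by simp
  define f where "f = (\<lambda>e i. (u i - p i) * ln ((p i + e * (u i - p i)) / w i))"
  define c where "c = (\<Sum>i\<in>J. ln (real n * w i) / real n)"
  define K where "K = real (card J) / real n"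
  have "i\<^sub>0 \<in> J"
    using zero by (simp add: J_def)
  with fin(1) have "0 < card J"
    using card_gt_0_iff by blast
  with n have "0 < K"
    by (simp add: K_def)
  have "\<forall>\<^sub>F e in at_right 0. e \<in> {0<..<(1::real)}"
    by (rule eventually_at_right_real) simp
  then have "\<forall>\<^sub>F e in at_right 0. (\<Sum>i\<in>P. f e i) - c + K * ln e = (\<Sum>i<n. f e i)"
  proof (rule eventually_mono)
    fix e :: real
    assume e: "e \<in> {0<..<1}"
    have "f e i = ln e / real n - ln (real n * w i) / real n" if "i \<in> J" for i
    proof -
      have i: "i < n" "p i = 0"
        using that by (auto simp: J_def)
      then have "f e i = ln (e / (real n * w i)) / real n"
        by (simp add: f_def u_def)
      also have "ln (e / (real n * w i)) = ln e - ln (real n * w i)"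
        using e w n i by (intro ln_divide_pos) auto
      finally show ?thesis
        by (simp add: diff_divide_distrib)
    qed
    then have "(\<Sum>i\<in>J. f e i) = K * ln e - c"
      by (simp add: sum_subtractf c_def K_def)
    moreover have "(\<Sum>i<n. f e i) = (\<Sum>i\<in>P. f e i) + (\<Sum>i\<in>J. f e i)"
      unfolding split(1) by (rule sum.union_disjoint[OF fin(2,1) split(2)])
    ultimately show "(\<Sum>i\<in>P. f e i) - c + K * ln e = (\<Sum>i<n. f e i)"
      by simp
  qed
  moreover have "filterlim (\<lambda>e. ((\<Sum>i\<in>P. f e i) - c) + K * ln e) at_bot (at_right 0)"
  proof -
    have "p i \<noteq> 0" "w i \<noteq> 0" if "i \<in> P" for i
      using that w by (auto simp: P_def)
    then have "((\<lambda>e. (\<Sum>i\<in>P. f e i) - c) \<longlongrightarrow> (\<Sum>i\<in>P. f 0 i) - c) (at_right 0)"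
      unfolding f_def by (intro tendsto_intros) auto
    moreover have "filterlim (\<lambda>e. K * ln e) at_bot (at_right 0)"
      by (rule filterlim_tendsto_pos_mult_at_bot[OF tendsto_const \<open>0 < K\<close> ln_at_0])
    ultimately show ?thesis
      by (simp add: filterlim_tendsto_add_at_bot_iff)
  qed
  ultimately show ?thesis
    unfolding f_def by (rule filterlim_cong[THEN iffD1, OF refl refl])
qed

lemma kl_projection_pos:
  assumes amin: "is_arg_min (\<lambda>q. kl_div n q w) (\<lambda>q. q \<in> capped_simplex n m) p"
    and w: "\<forall>i<n. 0 < w i" and m: "1 \<le> m" "m \<le> n"
  shows "\<forall>i<n. 0 < p i"
proof (rule ccontr)
  assume "\<not> (\<forall>i<n. 0 < p i)"
  moreover have "\<forall>i<n. 0 \<le> p i"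
    using amin by (simp add: is_arg_min_def capped_simplex_def)
  ultimately obtain i\<^sub>0 where "i\<^sub>0 < n" "p i\<^sub>0 = 0"
    by force
  define u where "u = (\<lambda>i::nat. if i < n then 1 / real n else 0)"
  define phi where "phi = (\<lambda>e. \<Sum>i<n. (u i - p i) * ln ((p i + e * (u i - p i)) / w i))"
  have "\<forall>\<^sub>F e in at_right 0. 0 \<le> phi e"
    unfolding phi_def u_def using \<open>i\<^sub>0 < n\<close>
    by (intro kl_projection_first_order_eventually[OF amin uniform_in_capped_simplex[OF m] w]) simp
  moreover have "\<forall>\<^sub>F e in at_right 0. phi e \<le> -1"
    using uniform_direction_sum_at_bot[where p = p and w = w, OF w \<open>i\<^sub>0 < n\<close> \<open>p i\<^sub>0 = 0\<close>]
    unfolding phi_def u_def filterlim_at_bot by blast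
  ultimately have "\<forall>\<^sub>F e::real in at_right 0. False"
    by eventually_elim simp
  then show False
    by simp
qed

lemma kl_projection_pythagoras:
  assumes amin: "is_arg_min (\<lambda>q. kl_div n q w) (\<lambda>q. q \<in> capped_simplex n m) p"
    and w: "\<forall>i<n. 0 < w i" "(\<Sum>i<n. w i) = 1" and m: "1 \<le> m" "m \<le> n"
    and u: "u \<in> capped_simplex n m"
  shows "kl_div n u p \<le> kl_div n u w"
proof -
  have p: "\<forall>i<n. 0 < p i"
    by (rule kl_projection_pos[OF amin w(1) m])
  have pK: "p \<in> capped_simplex n m"
    using amin by (simp add: is_arg_min_def)
  have u0: "\<forall>i<n. 0 \<le> u i"
    using u by (simp add: capped_simplex_def)
  define phi where "phi = (\<lambda>e. \<Sum>i<n. (u i - p i) * ln ((p i + e * (u i - p i)) / w i))"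
  have "(phi \<longlongrightarrow> phi 0) (at_right 0)"
    unfolding phi_def by (intro tendsto_intros) (use w p in auto)
  moreover have "\<forall>\<^sub>F e in at_right 0. 0 \<le> phi e"
    unfolding phi_def by (rule kl_projection_first_order_eventually[OF amin u w(1)]) (use p in auto)
  ultimately have "0 \<le> phi 0"
    using tendsto_lowerbound trivial_limit_at_right_real by blast
  then have "kl_div n p w \<le> (\<Sum>i<n. u i * ln (p i / w i))"
    by (simp add: phi_def kl_div_def algebra_simps sum_subtractf)
  moreover have "0 \<le> kl_div n p w"
    by (rule kl_div_nonneg) (use p w pK in \<open>auto simp: capped_simplex_def\<close>)
  moreover have "kl_div n u w - kl_div n u p = (\<Sum>i<n. u i * ln (p i / w i))"
    unfolding kl_div_def sum_subtractf[symmetric]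
  proof (rule sum.cong)
    fix i
    assume "i \<in> {..<n}"
    with p w u0 have "0 < p i" "0 < w i" "0 \<le> u i"
      by auto
    then show "u i * ln (u i / w i) - u i * ln (u i / p i) = u i * ln (p i / w i)"
      by (cases "u i = 0") (simp_all add: ln_div right_diff_distrib)
  qed simp
  ultimately show ?thesis
    by linarith
qed

section \<open>Exponential weights with mixing\<close>

lemma exp_weights_sum_pos:
  fixes l w :: "nat \<Rightarrow> real"
  assumes "\<forall>i<n. 0 \<le> w i" "(\<Sum>i<n. w i) = 1"
  shows "0 < (\<Sum>i<n. w i * exp (- \<eta> * l i))"
proof -
  have "\<exists>j<n. 0 < w j"
  proof (rule ccontr)
    assume "\<not> (\<exists>j<n. 0 < w j)"
    with assms(1) have "\<forall>j<n. w j = 0"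
      by force
    with assms(2) show False
      by simp
  qed
  then obtain j where "j < n" "0 < w j"
    by blast
  then have "0 < w j * exp (- \<eta> * l j)"
    by simp
  also have "\<dots> \<le> (\<Sum>i<n. w i * exp (- \<eta> * l i))"
    using \<open>j < n\<close> assms(1) by (intro member_le_sum) auto
  finally show ?thesis .
qed

lemma exp_weights_sum_le:
  fixes l w :: "nat \<Rightarrow> real"
  assumes w: "\<forall>i<n. 0 \<le> w i" "(\<Sum>i<n. w i) = 1" and l: "\<forall>i<n. 0 \<le> l i \<and> l i \<le> 1"
  shows "(\<Sum>i<n. w i * exp (- \<eta> * l i)) \<le> 1 - (1 - exp (- \<eta>)) * dotn n w l"
proof -
  have "w i * exp (- \<eta> * l i) \<le> w i * (1 - (1 - exp (- \<eta>)) * l i)" if "i < n" for i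
    using w l that exp_neg_mult_le_chord by (intro mult_left_mono) auto
  then have "(\<Sum>i<n. w i * exp (- \<eta> * l i)) \<le> (\<Sum>i<n. w i * (1 - (1 - exp (- \<eta>)) * l i))"
    by (intro sum_mono) simp
  also have "\<dots> = 1 - (1 - exp (- \<eta>)) * dotn n w l"
    using w(2) by (simp add: dotn_def right_diff_distrib sum_subtractf sum_distrib_left mult.left_commute)
  finally show ?thesis .
qed

lemma mixed_update_ge:
  assumes "\<forall>i<n. 0 \<le> w i" "\<alpha> \<le> 1" "i < n"
  shows "\<alpha> / real n \<le> mixed_update n \<eta> \<alpha> w l i"
proof -
  have "0 \<le> (\<Sum>j<n. w j * exp (- \<eta> * l j))"
    using assms(1) by (intro sum_nonneg) simp
  with assms show ?thesis
    by (simp add: mixed_update_def)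
qed

lemma sum_mixed_update:
  assumes "0 < n" "\<forall>i<n. 0 \<le> w i" "(\<Sum>i<n. w i) = 1"
  shows "(\<Sum>i<n. mixed_update n \<eta> \<alpha> w l i) = 1"
proof -
  define Z where "Z = (\<Sum>j<n. w j * exp (- \<eta> * l j))"
  have "0 < Z"
    unfolding Z_def using exp_weights_sum_pos[OF assms(2,3)] .
  then have "(\<Sum>i<n. w i * exp (- \<eta> * l i) / Z) = 1"
    by (simp add: sum_divide_distrib[symmetric] Z_def)
  then have "(\<Sum>i<n. (1 - \<alpha>) * (w i * exp (- \<eta> * l i) / Z)) = 1 - \<alpha>"
    by (subst sum_distrib_left[symmetric]) simp
  moreover have "(\<Sum>i<n. \<alpha> / real n) = \<alpha>"
    using assms(1) by simp
  ultimately show ?thesis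
    unfolding mixed_update_def Z_def[symmetric] sum.distrib by simp
qed

lemma kl_div_mixed_update_le:
  fixes l w q :: "nat \<Rightarrow> real" and \<eta> :: real
  assumes w: "\<forall>i<n. 0 < w i" "(\<Sum>i<n. w i) = 1" and q: "\<forall>i<n. 0 \<le> q i" "(\<Sum>i<n. q i) = 1"
    and \<alpha>: "0 \<le> \<alpha>" "\<alpha> < 1"
  defines "Z \<equiv> \<Sum>j<n. w j * exp (- \<eta> * l j)"
  shows "kl_div n q (mixed_update n \<eta> \<alpha> w l)
           \<le> kl_div n q w + \<eta> * dotn n q l + ln Z - ln (1 - \<alpha>)"
proof -
  have "0 < Z"
    unfolding Z_def using exp_weights_sum_pos w by (simp add: less_imp_le)
  have termwise: "q i * ln (q i / mixed_update n \<eta> \<alpha> w l i)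
        \<le> q i * (ln (q i / w i) + \<eta> * l i + ln Z - ln (1 - \<alpha>))" if "i < n" for i
  proof (cases "q i = 0")
    case False
    with q that have "0 < q i"
      by (simp add: less_le)
    define v where "v = (1 - \<alpha>) * (w i * exp (- \<eta> * l i) / Z)"
    have "0 < w i"
      using w that by simp
    with \<open>0 < Z\<close> \<alpha> have "0 < v"
      by (simp add: v_def)
    have "v \<le> mixed_update n \<eta> \<alpha> w l i"
      using \<alpha> by (simp add: mixed_update_def v_def Z_def)
    then have "ln (q i / mixed_update n \<eta> \<alpha> w l i) \<le> ln (q i / v)"
      using \<open>0 < v\<close> \<open>0 < q i\<close> by (intro ln_mono divide_left_mono) (auto intro: less_le_trans)
    also have "\<dots> = ln (q i / w i) + \<eta> * l i + ln Z - ln (1 - \<alpha>)"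
      using \<open>0 < q i\<close> \<open>0 < w i\<close> \<open>0 < Z\<close> \<alpha> by (simp add: v_def ln_div ln_mult)
    finally show ?thesis
      using \<open>0 < q i\<close> by (intro mult_left_mono) auto
  qed simp
  have "kl_div n q (mixed_update n \<eta> \<alpha> w l)
        \<le> (\<Sum>i<n. q i * (ln (q i / w i) + \<eta> * l i + ln Z - ln (1 - \<alpha>)))"
    unfolding kl_div_def by (rule sum_mono) (rule termwise, simp)
  also have "\<dots> = kl_div n q w + \<eta> * dotn n q l + (ln Z - ln (1 - \<alpha>)) * (\<Sum>i<n. q i)"
    by (simp add: kl_div_def dotn_def algebra_simps sum.distrib sum_subtractf
        sum_distrib_left sum_distrib_right)
  finally show ?thesis
    using q(2) by simp
qed

lemma exp_weights_step:
  fixes l w q :: "nat \<Rightarrow> real"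
  assumes w: "\<forall>i<n. 0 < w i" "(\<Sum>i<n. w i) = 1" and q: "\<forall>i<n. 0 \<le> q i" "(\<Sum>i<n. q i) = 1"
    and l: "\<forall>i<n. 0 \<le> l i \<and> l i \<le> 1" and \<alpha>: "0 \<le> \<alpha>" "\<alpha> < 1"
  shows "(1 - exp (- \<eta>)) * dotn n w l
           \<le> kl_div n q w - kl_div n q (mixed_update n \<eta> \<alpha> w l) + \<eta> * dotn n q l - ln (1 - \<alpha>)"
proof -
  define Z where "Z = (\<Sum>j<n. w j * exp (- \<eta> * l j))"
  have "0 < Z"
    unfolding Z_def using exp_weights_sum_pos w by (simp add: less_imp_le)
  then have "ln Z \<le> Z - 1"
    by (rule ln_le_minus_one)
  moreover have "Z \<le> 1 - (1 - exp (- \<eta>)) * dotn n w l"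
    unfolding Z_def using exp_weights_sum_le w l by (simp add: less_imp_le)
  moreover have "kl_div n q (mixed_update n \<eta> \<alpha> w l)
                   \<le> kl_div n q w + \<eta> * dotn n q l + ln Z - ln (1 - \<alpha>)"
    unfolding Z_def by (rule kl_div_mixed_update_le[OF w q \<alpha>])
  ultimately show ?thesis
    by linarith
qed

section \<open>Subset vectors\<close>

lemma sum_indicator_subset: "S \<subseteq> A \<Longrightarrow> finite A \<Longrightarrow> (\<Sum>i\<in>A. indicat_real S i) = real (card S)"
  by (simp add: indicator_def Int_absorb1)

lemma subset_vecs_eq_indicators:
  "subset_vecs n m = indicat_real ` {S. S \<subseteq> {..<n} \<and> card S = m}"
proof (intro equalityI subsetI)
  fix u
  assume u: "u \<in> subset_vecs n m"
  define S where "S = {i. i < n \<and> u i = 1}"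
  have "u i = indicat_real S i" for i
  proof (cases "i < n")
    case True
    with u have "u i = 0 \<or> u i = 1"
      by (simp add: subset_vecs_def)
    with True show ?thesis
      by (auto simp: S_def)
  qed (use u in \<open>simp add: subset_vecs_def S_def\<close>)
  moreover have "S \<subseteq> {..<n}" "card S = m"
    using u by (auto simp: S_def subset_vecs_def)
  ultimately show "u \<in> indicat_real ` {S. S \<subseteq> {..<n} \<and> card S = m}"
    by (intro image_eqI[of _ _ S]) auto
next
  fix u
  assume "u \<in> indicat_real ` {S. S \<subseteq> {..<n} \<and> card S = m}"
  then obtain S where S: "S \<subseteq> {..<n}" "card S = m" and u: "u = indicat_real S"
    by blast
  have "{i. i < n \<and> u i = 1} = S"
    using S(1) by (auto simp: u indicator_def)
  moreover have "u i = 0" if "n \<le> i" for i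
    using S(1) that by (auto simp: u indicator_def)
  ultimately show "u \<in> subset_vecs n m"
    unfolding subset_vecs_def using S(2) by (simp add: u indicator_def)
qed

lemma finite_subset_vecs: "finite (subset_vecs n m)"
  unfolding subset_vecs_eq_indicators by (rule finite_imageI) (simp add: finite_subset)

lemma subset_vecs_nonempty: "m \<le> n \<Longrightarrow> subset_vecs n m \<noteq> {}"
  unfolding subset_vecs_eq_indicators by (auto intro!: exI[of _ "{..<m}"])

lemma sum_subset_vec: "u \<in> subset_vecs n m \<Longrightarrow> (\<Sum>i<n. u i) = real m"
  unfolding subset_vecs_eq_indicators by (auto simp: sum_indicator_subset)

lemma subset_vec_bounds: "u \<in> subset_vecs n m \<Longrightarrow> 0 \<le> u i \<and> u i \<le> 1"
  unfolding subset_vecs_eq_indicators by auto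

lemma scaled_subset_vec_in_capped_simplex:
  assumes "u \<in> subset_vecs n m" "0 < m"
  shows "(\<lambda>i. u i / real m) \<in> capped_simplex n m"
  using assms sum_subset_vec[OF assms(1)] subset_vec_bounds[OF assms(1)]
  by (auto simp: capped_simplex_def subset_vecs_def sum_divide_distrib[symmetric] divide_right_mono)

text \<open>Take an \<open>m\<close>-subset of minimal total cost: exchanging one of its elements for an outside
  one cannot decrease the cost.\<close>

lemma cheapest_subset_exists:
  fixes c :: "nat \<Rightarrow> real"
  assumes "m \<le> n"
  shows "\<exists>S. S \<subseteq> {..<n} \<and> card S = m \<and> (\<forall>i\<in>S. \<forall>j<n. j \<notin> S \<longrightarrow> c i \<le> c j)"
proof -
  define F where "F = {S. S \<subseteq> {..<n} \<and> card S = m}"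
  have "finite F"
    unfolding F_def by (rule finite_subset[of _ "Pow {..<n}"]) auto
  moreover have "{..<m} \<in> F"
    using assms by (auto simp: F_def)
  ultimately have "Min (sum c ` F) \<in> sum c ` F"
    by (intro Min_in) auto
  then obtain S where S: "S \<in> F" "sum c S = Min (sum c ` F)"
    by (metis imageE)
  have min: "sum c S \<le> sum c S'" if "S' \<in> F" for S'
    unfolding S(2) using \<open>finite F\<close> that by simp
  from S have "S \<subseteq> {..<n}" "card S = m" "finite S"
    by (auto simp: F_def finite_subset)
  have "c i \<le> c j" if "i \<in> S" "j < n" "j \<notin> S" for i j
  proof -
    have "0 < card S"
      using \<open>finite S\<close> that(1) by (auto simp: card_gt_0_iff)
    then have "insert j (S - {i}) \<in> F"
      using \<open>S \<subseteq> {..<n}\<close> \<open>card S = m\<close> \<open>finite S\<close> that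
      by (auto simp: F_def card_insert_if card_Diff_singleton_if)
    moreover have "sum c (insert j (S - {i})) = sum c S - c i + c j"
      using \<open>finite S\<close> that by (simp add: sum_diff1)
    ultimately show ?thesis
      using min by fastforce
  qed
  with \<open>S \<subseteq> {..<n}\<close> \<open>card S = m\<close> show ?thesis
    by blast
qed

text \<open>With \<open>S\<close> a set of \<open>m\<close> cheapest coordinates and \<open>\<theta> = max\<^sub>i\<^sub>\<in>\<^sub>S c\<^sub>i\<close>, every term of
  \<open>\<Sum>\<^sub>i (m q\<^sub>i - 1\<^sub>S i)(c\<^sub>i - \<theta>)\<close> is nonnegative because \<open>0 \<le> m q\<^sub>i \<le> 1\<close>.\<close>

lemma capped_simplex_dominates_subset_vec:
  fixes c :: "nat \<Rightarrow> real"
  assumes m: "1 \<le> m" "m \<le> n" and q: "q \<in> capped_simplex n m"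
  shows "\<exists>u\<in>subset_vecs n m. dotn n u c \<le> real m * dotn n q c"
proof -
  obtain S where S: "S \<subseteq> {..<n}" "card S = m" and cheap: "\<forall>i\<in>S. \<forall>j<n. j \<notin> S \<longrightarrow> c i \<le> c j"
    using cheapest_subset_exists[OF m(2)] by blast
  have "finite S" "S \<noteq> {}"
    using S m finite_subset by auto
  define \<theta> where "\<theta> = Max (c ` S)"
  have "\<theta> \<in> c ` S"
    unfolding \<theta>_def using \<open>finite S\<close> \<open>S \<noteq> {}\<close> by simp
  have below: "c i \<le> \<theta>" if "i \<in> S" for i
    unfolding \<theta>_def using \<open>finite S\<close> that by simp
  have above: "\<theta> \<le> c j" if "j < n" "j \<notin> S" for j
    using \<open>\<theta> \<in> c ` S\<close> cheap that by auto
  have mq: "0 \<le> real m * q i \<and> real m * q i \<le> 1" if "i < n" for i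
    using q that m by (auto simp: capped_simplex_def field_simps)
  have "0 \<le> (\<Sum>i<n. (real m * q i - indicat_real S i) * (c i - \<theta>))"
  proof (rule sum_nonneg)
    fix i
    assume "i \<in> {..<n}"
    with mq[of i] below[of i] above[of i] show "0 \<le> (real m * q i - indicat_real S i) * (c i - \<theta>)"
      by (cases "i \<in> S") (auto intro: mult_nonpos_nonpos)
  qed
  also have "\<dots> = (\<Sum>i<n. real m * (q i * c i) - indicat_real S i * c i
                          - \<theta> * (real m * q i - indicat_real S i))"
    by (intro sum.cong) (simp_all add: algebra_simps)
  also have "\<dots> = real m * dotn n q c - dotn n (indicat_real S) c
                   - \<theta> * (real m * (\<Sum>i<n. q i) - (\<Sum>i<n. indicat_real S i))"
    by (simp add: dotn_def sum_subtractf sum_distrib_left right_diff_distrib)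
  also have "(\<Sum>i<n. indicat_real S i) = real m"
    using S by (simp add: sum_indicator_subset)
  finally have "dotn n (indicat_real S) c \<le> real m * dotn n q c"
    using q by (simp add: capped_simplex_def)
  moreover have "indicat_real S \<in> subset_vecs n m"
    using S by (auto simp: subset_vecs_eq_indicators)
  ultimately show ?thesis
    by blast
qed

lemma dotn_sum_right: "dotn n u (\<lambda>i. \<Sum>t\<in>A. l t i) = (\<Sum>t\<in>A. dotn n u (l t))"
  unfolding dotn_def by (simp add: sum_distrib_left sum.swap[of _ A])

definition best_subset_loss :: "nat \<Rightarrow> nat \<Rightarrow> (nat \<Rightarrow> nat \<Rightarrow> real) \<Rightarrow> nat \<Rightarrow> nat \<Rightarrow> real" where
  "best_subset_loss n m l r s = Min ((\<lambda>u. \<Sum>t=r..s. dotn n u (l t)) ` subset_vecs n m)"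

lemma interval_regret_eq:
  "interval_regret n k l w r s
     = real (n - k) * (\<Sum>t=r..s. dotn n (w t) (l t)) - best_subset_loss n (n - k) l r s"
  by (simp add: interval_regret_def expected_loss_def best_subset_loss_def sum_distrib_left)

lemma best_subset_loss_attained:
  assumes "m \<le> n"
  obtains u where "u \<in> subset_vecs n m" "best_subset_loss n m l r s = (\<Sum>t=r..s. dotn n u (l t))"
proof -
  have "best_subset_loss n m l r s \<in> (\<lambda>u. \<Sum>t=r..s. dotn n u (l t)) ` subset_vecs n m"
    unfolding best_subset_loss_def using finite_subset_vecs subset_vecs_nonempty[OF assms] by simp
  with that show ?thesis
    by blast
qed

lemma best_subset_loss_le:
  "u \<in> subset_vecs n m \<Longrightarrow> best_subset_loss n m l r s \<le> (\<Sum>t=r..s. dotn n u (l t))"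
  unfolding best_subset_loss_def using finite_subset_vecs by simp

lemma best_subset_loss_nonneg:
  assumes "m \<le> n" and l: "\<And>t i. t \<in> {r..s} \<Longrightarrow> i < n \<Longrightarrow> 0 \<le> l t i"
  shows "0 \<le> best_subset_loss n m l r s"
proof -
  obtain u where u: "u \<in> subset_vecs n m" and best: "best_subset_loss n m l r s = (\<Sum>t=r..s. dotn n u (l t))"
    using best_subset_loss_attained[OF assms(1)] .
  show ?thesis
    unfolding best dotn_def using subset_vec_bounds[OF u] l
    by (intro sum_nonneg mult_nonneg_nonneg) auto
qed

lemma best_subset_loss_Suc_le:
  assumes "m \<le> n" "r \<le> s" and l: "\<And>i. i < n \<Longrightarrow> 0 \<le> l r i"
  shows "best_subset_loss n m l (Suc r) s \<le> best_subset_loss n m l r s"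
proof -
  obtain u where u: "u \<in> subset_vecs n m" and best: "best_subset_loss n m l r s = (\<Sum>t=r..s. dotn n u (l t))"
    using best_subset_loss_attained[OF assms(1)] .
  have "0 \<le> dotn n u (l r)"
    unfolding dotn_def using subset_vec_bounds[OF u] l by (intro sum_nonneg mult_nonneg_nonneg) auto
  then have "(\<Sum>t=Suc r..s. dotn n u (l t)) \<le> (\<Sum>t=r..s. dotn n u (l t))"
    using assms(2) by (simp add: sum.atLeast_Suc_atMost)
  with best_subset_loss_le[OF u, of l "Suc r" s] best show ?thesis
    by linarith
qed

lemma best_subset_loss_le_INF:
  assumes "1 \<le> m" "m \<le> n"
  shows "best_subset_loss n m l r s \<le> (INF q\<in>capped_simplex n m. \<Sum>t=r..s. real m * dotn n q (l t))"
proof (rule cINF_greatest)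
  show "capped_simplex n m \<noteq> {}"
    using uniform_in_capped_simplex[OF assms] by blast
next
  fix q
  assume "q \<in> capped_simplex n m"
  then obtain u where u: "u \<in> subset_vecs n m"
    and "dotn n u (\<lambda>i. \<Sum>t=r..s. l t i) \<le> real m * dotn n q (\<lambda>i. \<Sum>t=r..s. l t i)"
    using capped_simplex_dominates_subset_vec[OF assms] by blast
  then have "(\<Sum>t=r..s. dotn n u (l t)) \<le> (\<Sum>t=r..s. real m * dotn n q (l t))"
    by (simp add: dotn_sum_right sum_distrib_left)
  with best_subset_loss_le[OF u, of l r s] show "best_subset_loss n m l r s \<le> (\<Sum>t=r..s. real m * dotn n q (l t))"
    by linarith
qed

section \<open>Tuning of the parameters\<close>

lemma ln_ge_half:
  fixes y :: real
  assumes "2 \<le> y"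
  shows "1 / 2 \<le> ln y"
proof -
  have "ln (1 / y) \<le> 1 / y - 1"
    using assms by (intro ln_le_minus_one) simp
  moreover have "ln (1 / y) = - ln y"
    using assms by (simp add: ln_div)
  moreover have "1 / y \<le> 1 / 2"
    using assms by (simp add: field_simps)
  ultimately show ?thesis
    by linarith
qed

lemma tuned_scale_bounds:
  fixes m n T :: nat
  assumes "1 \<le> m" "m \<le> n" "1 \<le> T"
  defines "D \<equiv> real m * ln (real n * (1 + real m * real T)) + 1"
  shows "0 < D" "real m \<le> 2 * D"
proof -
  define \<Lambda> where "\<Lambda> = ln (real n * (1 + real m * real T))"
  have "1 * 1 \<le> real m * real T"
    using assms by (intro mult_mono) auto
  then have "2 * 1 \<le> (1 + real m * real T) * real n"
    using assms by (intro mult_mono) auto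
  then have "1 / 2 \<le> \<Lambda>"
    unfolding \<Lambda>_def by (intro ln_ge_half) (simp add: mult.commute)
  then have "real m * (1 / 2) \<le> real m * \<Lambda>"
    by (intro mult_left_mono) auto
  moreover have "D = real m * \<Lambda> + 1"
    by (simp add: D_def \<Lambda>_def)
  ultimately show "0 < D" "real m \<le> 2 * D"
    using of_nat_0_le_iff[of m] by linarith+
qed

lemma neg_ln_one_minus_le:
  fixes x :: real
  assumes "0 \<le> x" "x < 1"
  shows "- ln (1 - x) \<le> x / (1 - x)"
proof -
  have "ln (1 / (1 - x)) \<le> 1 / (1 - x) - 1"
    using assms by (intro ln_le_minus_one) simp
  moreover have "1 / (1 - x) - 1 = x / (1 - x)"
    using assms by (simp add: field_simps)
  ultimately show ?thesis
    using assms by (simp add: ln_div)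
qed

lemma tuned_log_terms_le:
  fixes m n T :: nat
  assumes "1 \<le> m" "m \<le> n" "1 \<le> T"
  defines "\<alpha> \<equiv> 1 / (real T * real m + 1)"
  shows "real m * ln (real n / (real m * \<alpha>)) - real m * real T * ln (1 - \<alpha>)
           \<le> real m * ln (real n * (1 + real m * real T)) + 1"
proof -
  have Tm: "0 < real T * real m" and n: "0 < real n"
    using assms by simp_all
  have "real n / (real m * \<alpha>) = real n * (1 + real m * real T) / real m"
    by (simp add: \<alpha>_def algebra_simps)
  also have "\<dots> \<le> real n * (1 + real m * real T) / 1"
    using assms(1) by (intro divide_left_mono) auto
  finally have "ln (real n / (real m * \<alpha>)) \<le> ln (real n * (1 + real m * real T))"
    using n Tm assms(1) by (intro ln_mono) (auto simp: \<alpha>_def zero_less_mult_iff add_pos_pos)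
  then have first: "real m * ln (real n / (real m * \<alpha>)) \<le> real m * ln (real n * (1 + real m * real T))"
    by (intro mult_left_mono) auto
  have "\<alpha> / (1 - \<alpha>) = 1 / (real T * real m)"
    using Tm by (simp add: \<alpha>_def field_simps)
  then have "- ln (1 - \<alpha>) \<le> 1 / (real T * real m)"
    using neg_ln_one_minus_le[of \<alpha>] Tm by (simp add: \<alpha>_def)
  then have "real m * real T * (- ln (1 - \<alpha>)) \<le> real m * real T * (1 / (real T * real m))"
    by (intro mult_left_mono) auto
  also have "\<dots> = 1"
    using assms by simp
  finally show ?thesis
    using first by simp
qed

text \<open>Choosing \<open>\<eta> = ln (1 + x)\<close> with \<open>x = \<surd>(2D/L)\<close> gives \<open>1 - e\<^sup>-\<^sup>\<eta> = x/(1+x)\<close> and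
  \<open>\<eta> \<le> x\<close>, which balances \<open>D/x\<close> against \<open>x L\<close>.\<close>

lemma exp_weights_tuning:
  fixes A M D L :: real
  assumes D: "0 < D" and L: "0 < L" and M: "0 \<le> M" "M \<le> L"
    and A: "(1 - exp (- ln (1 + sqrt (2 * D / L)))) * A \<le> D + ln (1 + sqrt (2 * D / L)) * M"
  shows "A - M \<le> D + 3 / 2 * sqrt (2 * L * D)"
proof -
  define x where "x = sqrt (2 * D / L)"
  have "0 < x"
    using D L by (simp add: x_def)
  have x2: "x * x = 2 * D / L"
    using D L by (simp add: x_def)
  have "1 - exp (- ln (1 + x)) = x / (1 + x)"
    using \<open>0 < x\<close> by (simp add: exp_minus field_simps)
  moreover have "ln (1 + x) * M \<le> x * M"
    using \<open>0 < x\<close> M by (intro mult_right_mono ln_add_one_self_le_self) auto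
  ultimately have "x / (1 + x) * A \<le> D + x * M"
    using A by (simp add: x_def)
  then have "x * A \<le> (1 + x) * (D + x * M)"
    using \<open>0 < x\<close> by (simp add: field_simps)
  then have "x * (A - M) \<le> D + x * D + x * x * M"
    by (simp add: algebra_simps)
  also have "\<dots> \<le> D + x * D + x * x * L"
    using M by (simp add: mult_left_mono)
  also have "\<dots> = x * (D + 3 / 2 * (L * x))"
  proof -
    have "D = L * x * x / 2"
      using x2 L by (simp add: field_simps)
    then show ?thesis
      by (subst (1) \<open>D = L * x * x / 2\<close>) (simp add: algebra_simps)
  qed
  finally have "A - M \<le> D + 3 / 2 * (L * x)"
    using \<open>0 < x\<close> by simp
  moreover have "L * x = sqrt (2 * L * D)"
  proof -
    have "L * x = sqrt (L * L) * sqrt (2 * D / L)"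
      using L by (simp add: x_def)
    also have "\<dots> = sqrt (L * L * (2 * D / L))"
      by (rule real_sqrt_mult[symmetric])
    also have "L * L * (2 * D / L) = 2 * L * D"
      using L by (simp add: field_simps)
    finally show ?thesis .
  qed
  ultimately show ?thesis
    by simp
qed

section \<open>Runs of the algorithm\<close>

locale capped_exp_weights_run =
  fixes n k T :: nat and \<eta> \<alpha> :: real and l w :: "nat \<Rightarrow> nat \<Rightarrow> real"
  assumes k_less_n: "k < n"
    and loss_bounds: "\<And>t i. 1 \<le> t \<Longrightarrow> t \<le> T \<Longrightarrow> i < n \<Longrightarrow> 0 \<le> l t i \<and> l t i \<le> 1"
    and \<alpha>: "0 < \<alpha>" "\<alpha> < 1"
    and run: "is_run n k T \<eta> \<alpha> l w"
begin

abbreviation K :: "(nat \<Rightarrow> real) set" where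
  "K \<equiv> capped_simplex n (n - k)"

abbreviation w_mixed :: "nat \<Rightarrow> nat \<Rightarrow> real" where
  "w_mixed t \<equiv> mixed_update n \<eta> \<alpha> (w t) (l t)"

lemma subset_size: "1 \<le> n - k" "n - k \<le> n"
  using k_less_n by auto

lemma w_succ_is_projection:
  "1 \<le> t \<Longrightarrow> t < T \<Longrightarrow> is_arg_min (\<lambda>q. kl_div n q (w_mixed t)) (\<lambda>q. q \<in> K) (w (t + 1))"
  using run by (simp add: is_run_def)

lemma w_in_capped_simplex:
  assumes "1 \<le> t" "t \<le> T"
  shows "w t \<in> K"
proof (cases "t = 1")
  case False
  with assms have t: "1 \<le> t - 1" "t - 1 < T" "t = t - 1 + 1"
    by auto
  then have "w (t - 1 + 1) \<in> K"
    using w_succ_is_projection[OF t(1,2)] by (simp add: is_arg_min_def)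
  with t(3) show ?thesis
    by simp
qed (use run in \<open>simp add: is_run_def\<close>)

lemma w_mixed_ge:
  assumes "1 \<le> t" "t \<le> T" "i < n"
  shows "\<alpha> / real n \<le> w_mixed t i"
  using w_in_capped_simplex[OF assms(1,2)] \<alpha> assms(3)
  by (intro mixed_update_ge) (auto simp: capped_simplex_def)

lemma w_mixed_pos:
  assumes "1 \<le> t" "t \<le> T"
  shows "\<forall>i<n. 0 < w_mixed t i"
proof -
  have "0 < \<alpha> / real n"
    using \<alpha> k_less_n by simp
  with w_mixed_ge[OF assms] show ?thesis
    by (blast intro: less_le_trans)
qed

lemma sum_w_mixed: "1 \<le> t \<Longrightarrow> t \<le> T \<Longrightarrow> (\<Sum>i<n. w_mixed t i) = 1"
  using w_in_capped_simplex k_less_n by (intro sum_mixed_update) (auto simp: capped_simplex_def)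

lemma w_pos:
  assumes "2 \<le> t" "t \<le> T"
  shows "\<forall>i<n. 0 < w t i"
proof -
  from assms have t: "1 \<le> t - 1" "t - 1 < T" "t = t - 1 + 1"
    by auto
  then have "\<forall>i<n. 0 < w (t - 1 + 1) i"
    by (intro kl_projection_pos[OF w_succ_is_projection[OF t(1,2)] w_mixed_pos subset_size]) auto
  with t(3) show ?thesis
    by simp
qed

lemma kl_w_succ_le:
  "1 \<le> t \<Longrightarrow> t < T \<Longrightarrow> q \<in> K \<Longrightarrow> kl_div n q (w (t + 1)) \<le> kl_div n q (w_mixed t)"
  by (rule kl_projection_pythagoras[OF w_succ_is_projection w_mixed_pos sum_w_mixed subset_size]) auto

lemma kl_w_restart_le:
  assumes "2 \<le> r" "r \<le> T" "q \<in> K"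
  shows "kl_div n q (w r) \<le> ln (real n / (real (n - k) * \<alpha>))"
proof -
  from assms have r: "1 \<le> r - 1" "r - 1 < T" "r = r - 1 + 1"
    by auto
  then have "kl_div n q (w r) \<le> kl_div n q (w_mixed (r - 1))"
    using kl_w_succ_le[OF r(1,2) assms(3)] by simp
  also have "\<dots> \<le> ln ((1 / real (n - k)) / (\<alpha> / real n))"
    using assms(3) \<alpha> k_less_n w_mixed_ge[OF r(1)] r(2)
    by (intro kl_div_le_ln_ratio) (auto simp: capped_simplex_def)
  finally show ?thesis
    by (simp add: field_simps)
qed

lemma round_loss_le:
  assumes "2 \<le> t" "t \<le> T" "q \<in> K"
  shows "(1 - exp (- \<eta>)) * dotn n (w t) (l t)
           \<le> kl_div n q (w t) - kl_div n q (w_mixed t) + \<eta> * dotn n q (l t) - ln (1 - \<alpha>)"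
  using w_pos[OF assms(1,2)] w_in_capped_simplex[of t] assms loss_bounds[of t] \<alpha>
  by (intro exp_weights_step) (auto simp: capped_simplex_def)

lemma interval_loss_le_telescoped:
  assumes "2 \<le> r" "r \<le> s" "s \<le> T" "q \<in> K"
  shows "(1 - exp (- \<eta>)) * (\<Sum>t=r..s. dotn n (w t) (l t))
           \<le> kl_div n q (w r) - kl_div n q (w_mixed s) + \<eta> * (\<Sum>t=r..s. dotn n q (l t))
              - real (s + 1 - r) * ln (1 - \<alpha>)"
  using assms(2,3)
proof (induction s rule: dec_induct)
  case base
  then show ?case
    using round_loss_le[OF assms(1) _ assms(4)] by simp
next
  case (step s)
  have "kl_div n q (w (Suc s)) \<le> kl_div n q (w_mixed s)"
    using kl_w_succ_le[of s q] assms step by simp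
  moreover have "real (Suc s + 1 - r) = real (s + 1 - r) + 1"
    using step by simp
  ultimately show ?case
    using step round_loss_le[of "Suc s" q] assms by (simp add: algebra_simps)
qed

lemma interval_loss_le_comparator:
  assumes "2 \<le> r" "r \<le> s" "s \<le> T" "q \<in> K"
  shows "(1 - exp (- \<eta>)) * (\<Sum>t=r..s. dotn n (w t) (l t))
           \<le> ln (real n / (real (n - k) * \<alpha>)) + \<eta> * (\<Sum>t=r..s. dotn n q (l t)) - real T * ln (1 - \<alpha>)"
proof -
  have "0 \<le> kl_div n q (w_mixed s)"
    using assms w_mixed_pos[of s] sum_w_mixed[of s]
    by (intro kl_div_nonneg) (auto simp: capped_simplex_def)
  moreover have "- real (s + 1 - r) * ln (1 - \<alpha>) \<le> - real T * ln (1 - \<alpha>)"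
    using assms \<alpha> by (intro mult_right_mono_neg) auto
  ultimately show ?thesis
    using interval_loss_le_telescoped[OF assms] kl_w_restart_le[of r q] assms by linarith
qed

lemma interval_loss_le_best_subset:
  assumes "2 \<le> r" "r \<le> s" "s \<le> T"
  shows "(1 - exp (- \<eta>)) * (real (n - k) * (\<Sum>t=r..s. dotn n (w t) (l t)))
           \<le> real (n - k) * ln (real n / (real (n - k) * \<alpha>)) - real (n - k) * real T * ln (1 - \<alpha>)
              + \<eta> * best_subset_loss n (n - k) l r s"
proof -
  obtain u where u: "u \<in> subset_vecs n (n - k)"
    and best: "best_subset_loss n (n - k) l r s = (\<Sum>t=r..s. dotn n u (l t))"
    using best_subset_loss_attained[OF subset_size(2)] .
  define q where "q = (\<lambda>i. u i / real (n - k))"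
  have "q \<in> K"
    unfolding q_def using scaled_subset_vec_in_capped_simplex[OF u] subset_size by simp
  have best_q: "real (n - k) * (\<Sum>t=r..s. dotn n q (l t)) = best_subset_loss n (n - k) l r s"
    using subset_size unfolding best q_def dotn_def
    by (simp add: sum_distrib_left sum_divide_distrib)
  have "(1 - exp (- \<eta>)) * (real (n - k) * (\<Sum>t=r..s. dotn n (w t) (l t)))
        = real (n - k) * ((1 - exp (- \<eta>)) * (\<Sum>t=r..s. dotn n (w t) (l t)))"
    by simp
  also have "\<dots> \<le> real (n - k) * (ln (real n / (real (n - k) * \<alpha>))
                    + \<eta> * (\<Sum>t=r..s. dotn n q (l t)) - real T * ln (1 - \<alpha>))"
    by (intro mult_left_mono interval_loss_le_comparator[OF assms \<open>q \<in> K\<close>]) simp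
  also have "\<dots> = real (n - k) * ln (real n / (real (n - k) * \<alpha>))
                  - real (n - k) * real T * ln (1 - \<alpha>)
                  + \<eta> * (real (n - k) * (\<Sum>t=r..s. dotn n q (l t)))"
    by (simp add: algebra_simps)
  finally show ?thesis
    unfolding best_q .
qed

lemma dotn_w_le_one:
  assumes "1 \<le> t" "t \<le> T"
  shows "dotn n (w t) (l t) \<le> 1"
proof -
  have "dotn n (w t) (l t) \<le> (\<Sum>i<n. w t i)"
    unfolding dotn_def using w_in_capped_simplex[OF assms] loss_bounds[OF assms]
    by (intro sum_mono) (auto simp: capped_simplex_def intro: mult_left_le)
  also have "\<dots> = 1"
    using w_in_capped_simplex[OF assms] by (simp add: capped_simplex_def)
  finally show ?thesis .
qed

lemma run_best_subset_loss_nonneg: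
  "1 \<le> r \<Longrightarrow> s \<le> T \<Longrightarrow> 0 \<le> best_subset_loss n (n - k) l r s"
  using loss_bounds by (intro best_subset_loss_nonneg[OF subset_size(2)]) auto

lemma interval_regret_single_le:
  assumes "1 \<le> t" "t \<le> T"
  shows "interval_regret n k l w t t \<le> real (n - k)"
proof -
  have "real (n - k) * dotn n (w t) (l t) \<le> real (n - k)"
    using dotn_w_le_one[OF assms] by (intro mult_left_le) simp_all
  with run_best_subset_loss_nonneg[OF assms] show ?thesis
    by (simp add: interval_regret_eq)
qed

lemma interval_regret_first_split:
  assumes "2 \<le> s" "s \<le> T"
  shows "interval_regret n k l w 1 s \<le> real (n - k) + interval_regret n k l w 2 s"
proof -
  have "(\<Sum>t=1..s. dotn n (w t) (l t)) = dotn n (w 1) (l 1) + (\<Sum>t=2..s. dotn n (w t) (l t))"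
    using assms by (simp add: sum.atLeast_Suc_atMost numeral_2_eq_2)
  moreover have "best_subset_loss n (n - k) l 2 s \<le> best_subset_loss n (n - k) l 1 s"
    using best_subset_loss_Suc_le[OF subset_size(2), of 1 s l] loss_bounds[of 1] assms
    by (simp add: numeral_2_eq_2)
  moreover have "real (n - k) * dotn n (w 1) (l 1) \<le> real (n - k)"
    using dotn_w_le_one[of 1] assms by (simp add: mult_left_le)
  ultimately show ?thesis
    by (simp add: interval_regret_eq algebra_simps)
qed

lemma interval_regret_after_first_le:
  assumes L: "0 < L" "best_subset_loss n (n - k) l r s \<le> L"
    and D: "0 < D" "real (n - k) * ln (real n / (real (n - k) * \<alpha>))
                     - real (n - k) * real T * ln (1 - \<alpha>) \<le> D"
    and \<eta>: "\<eta> = ln (1 + sqrt (2 * D / L))"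
    and rs: "2 \<le> r" "r \<le> s" "s \<le> T"
  shows "interval_regret n k l w r s \<le> D + 3 / 2 * sqrt (2 * L * D)"
proof -
  have "(1 - exp (- \<eta>)) * (real (n - k) * (\<Sum>t=r..s. dotn n (w t) (l t)))
        \<le> D + \<eta> * best_subset_loss n (n - k) l r s"
    using interval_loss_le_best_subset[OF rs] D(2) by linarith
  then show ?thesis
    unfolding interval_regret_eq
    using exp_weights_tuning[OF D(1) L(1) run_best_subset_loss_nonneg L(2)] \<eta> rs by simp
qed

end

lemma interval_regret_le:
  fixes n k T r s :: nat and L :: real and l w :: "nat \<Rightarrow> nat \<Rightarrow> real"
  defines "D \<equiv> real (n - k) * ln (real n * (1 + real (n - k) * real T)) + 1"
  assumes "k < n" "1 \<le> T" "0 < L"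
    and loss: "\<forall>t i. 1 \<le> t \<and> t \<le> T \<and> i < n \<longrightarrow> 0 \<le> l t i \<and> l t i \<le> 1"
    and comparator: "\<forall>r s. 1 \<le> r \<and> r \<le> s \<and> s \<le> T \<longrightarrow>
        (INF q\<in>capped_simplex n (n - k). \<Sum>t=r..s. real (n - k) * dotn n q (l t)) \<le> L"
    and run: "is_run n k T (ln (1 + sqrt (2 * D / L))) (1 / (real T * real (n - k) + 1)) l w"
    and rs: "1 \<le> r" "r \<le> s" "s \<le> T"
  shows "interval_regret n k l w r s \<le> 3 * (sqrt (2 * L * D) + D)"
proof -
  have "0 < 1 / (x + 1) \<and> 1 / (x + 1) < 1" if "0 < x" for x :: real
    using that by (simp add: field_simps)
  moreover have "0 < real T * real (n - k)"
    using \<open>k < n\<close> \<open>1 \<le> T\<close> by simp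
  ultimately have "0 < 1 / (real T * real (n - k) + 1)" "1 / (real T * real (n - k) + 1) < 1"
    by blast+
  with \<open>k < n\<close> loss run interpret
    capped_exp_weights_run n k T "ln (1 + sqrt (2 * D / L))" "1 / (real T * real (n - k) + 1)" l w
    by unfold_locales auto
  have "0 < D" "real (n - k) \<le> 2 * D"
    unfolding D_def using tuned_scale_bounds[OF subset_size \<open>1 \<le> T\<close>] by simp_all
  define S where "S = sqrt (2 * L * D)"
  have "0 \<le> S"
    using \<open>0 < L\<close> \<open>0 < D\<close> by (simp add: S_def)
  have late: "interval_regret n k l w r' s \<le> D + 3 / 2 * S" if "2 \<le> r'" "r' \<le> s" for r'
    unfolding S_def
  proof (rule interval_regret_after_first_le[OF \<open>0 < L\<close> _ \<open>0 < D\<close>])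
    show "best_subset_loss n (n - k) l r' s \<le> L"
      using comparator that rs by (intro order_trans[OF best_subset_loss_le_INF[OF subset_size]]) auto
    show "real (n - k) * ln (real n / (real (n - k) * (1 / (real T * real (n - k) + 1))))
          - real (n - k) * real T * ln (1 - 1 / (real T * real (n - k) + 1)) \<le> D"
      using tuned_log_terms_le[OF subset_size \<open>1 \<le> T\<close>] by (simp add: D_def)
  qed (use that rs in auto)
  consider "2 \<le> r" | "r = 1" "s = 1" | "r = 1" "2 \<le> s"
    using rs by linarith
  then have "interval_regret n k l w r s \<le> 3 * (S + D)"
  proof cases
    case 1
    with late[of r] rs \<open>0 < D\<close> \<open>0 \<le> S\<close> show ?thesis
      by simp
  next
    case 2
    with interval_regret_single_le[of 1] rs \<open>real (n - k) \<le> 2 * D\<close> \<open>0 \<le> S\<close> show ?thesis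
      by simp
  next
    case 3
    with interval_regret_first_split[of s] late[of 2] rs \<open>real (n - k) \<le> 2 * D\<close> \<open>0 \<le> S\<close>
    show ?thesis
      by simp
  qed
  then show ?thesis
    by (simp add: S_def)
qed

theorem theorem4p1:
  "\<exists>C::real. \<forall>(n::nat) (k::nat) (T::nat) (L::real) (l::nat \<Rightarrow> nat \<Rightarrow> real) (w::nat \<Rightarrow> nat \<Rightarrow> real).
     1 \<le> k \<and> k < n \<and> 1 \<le> T \<and> 0 < L \<and>
     (\<forall>t i. 1 \<le> t \<and> t \<le> T \<and> i < n \<longrightarrow> 0 \<le> l t i \<and> l t i \<le> 1) \<and>
     (\<forall>r s. 1 \<le> r \<and> r \<le> s \<and> s \<le> T \<longrightarrow>
        (INF q\<in>capped_simplex n (n - k). \<Sum>t=r..s. real (n - k) * dotn n q (l t)) \<le> L) \<and>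
     is_run n k T (ln (1 + sqrt (2 * (real (n - k) * ln (real n * (1 + real (n - k) * real T)) + 1) / L)))
                  (1 / (real T * real (n - k) + 1)) l w
     \<longrightarrow> (\<forall>r s. 1 \<le> r \<and> r \<le> s \<and> s \<le> T \<longrightarrow>
            interval_regret n k l w r s
              \<le> C * (sqrt (2 * L * (real (n - k) * ln (real n * (1 + real (n - k) * real T)) + 1))
                     + (real (n - k) * ln (real n * (1 + real (n - k) * real T)) + 1)))"
  by (intro exI[of _ 3] allI impI, elim conjE) (rule interval_regret_le; assumption)

end
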